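(* In the meta-RL setting described in the context, assuming $D(P_{\mathcal M_{1:n}}\|Q_{\mathcal M_{1:n}})<\infty$, $$\mathbb E_{\theta,\mathcal M_{1:n}}\big[J_{\mathcal M_{1:n}}(\theta)-J_{\mathcal U}(\theta)\big]\le\sqrt{\frac{2I(\theta,\phi_{1:n};\mathcal M_{1:n})+2D(P_{\mathcal M_{1:n}}\|Q_{\mathcal M_{1:n}})}{n(1-\gamma)^2}},$$ where the expectation and mutual information are under $\mathcal M_{1:n}\sim P_{\mathcal M_{1:n}}$, $\theta\sim P_{\theta|\mathcal M_{1:n}}$, $\phi_i\sim P_{\phi|\mathcal M_i,\theta}$.
   Context: An MDP $\mathcal M=(\mathcal S,\mathcal A,\mathcal P,\rho,r,\gamma,H)$ has finite state and action spaces, transition kernel $\mathcal P$, initial distribution $\rho$, reward $r(s,a)\in[0,1]$, discount $\gamma\in[0,1)$ and finite horizon $H$. A policy $\pi_\phi$ is parameterized by $\phi$; a trajectory $\omega=\{s_h,a_h,r_h,s_{h+1}\}_{h=0}^H$ has law $P_{\omega|\mathcal M,\phi}=\rho(s_0)\prod_{h=0}^H\pi_\phi(a_h|s_h)\mathcal P(s_{h+1}|s_h,a_h)$, and $J(\pi_\phi,\mathcal M)=\mathbb E_{\omega\sim P_{\omega|\mathcal M,\phi}}[\sum_{j=0}^H\gamma^jr_j]$. Training MDPs $\mathcal M_1,\dots,\mathcal M_n$ are i.i.d. from a training environment $\mathcal T$ (a distribution over MDPs); $P_{\mathcal M_{1:n}}=\mathcal T^{\otimes n}$, and $Q_{\mathcal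 M_{1:n}}=\mathcal U^{\otimes n}$ for a testing environment $\mathcal U$. A meta-learner outputs $\theta$ via a kernel $P_{\theta|\mathcal M_{1:n}}$, and an adaptation rule gives task-specific parameters $\phi\sim P_{\phi|\mathcal M,\theta}$. Empirical objective $J_{\mathcal M_{1:n}}(\theta)=\frac1n\sum_{i=1}^n\mathbb E_{\phi_i\sim P_{\phi|\mathcal M_i,\theta}}[J(\pi_{\phi_i},\mathcal M_i)]$; population objective $J_{\mathcal U}(\theta)=\mathbb E_{\mathcal M\sim\mathcal U}\mathbb E_{\phi\sim P_{\phi|\mathcal M,\theta}}[J(\pi_\phi,\mathcal M)]$. $D$ is KL divergence, $I$ mutual information. *)

theory Defs
  imports "HOL-Probability.Probability"
begin

text \<open>The discount gamma and horizon H are shared by all MDPs of the meta-learning problem and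
  are passed as separate parameters.\<close>

record ('s, 'a) mdp =
  init  :: "'s pmf"
  trans :: "'s \<Rightarrow> 'a \<Rightarrow> 's pmf"
  rew   :: "'s \<Rightarrow> 'a \<Rightarrow> real"

definition valid_mdp :: "('s, 'a) mdp \<Rightarrow> bool" where
  "valid_mdp M \<longleftrightarrow> (\<forall>s a. 0 \<le> rew M s a \<and> rew M s a \<le> 1)"

text \<open>Trajectory segment started in state s: steps h, h-1, ..., 0 remaining, each step a list
  entry (s_j, a_j, r_j, s_{j+1}).\<close>
primrec traj :: "('s, 'a) mdp \<Rightarrow> ('s \<Rightarrow> 'a pmf) \<Rightarrow> nat \<Rightarrow> 's \<Rightarrow> ('s \<times> 'a \<times> real \<times> 's) list pmf" where
  "traj M pol1 0 s =
     bind_pmf (pol1 s) (\<lambda>a. bind_pmf (trans M s a) (\<lambda>s'. return_pmf [(s, a, rew M s a, s')]))"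
| "traj M pol1 (Suc h) s =
     bind_pmf (pol1 s) (\<lambda>a. bind_pmf (trans M s a) (\<lambda>s'.
       bind_pmf (traj M pol1 h s') (\<lambda>rest. return_pmf ((s, a, rew M s a, s') # rest))))"

definition traj_law :: "nat \<Rightarrow> ('s, 'a) mdp \<Rightarrow> ('s \<Rightarrow> 'a pmf) \<Rightarrow> ('s \<times> 'a \<times> real \<times> 's) list pmf" where
  "traj_law H M pol1 = bind_pmf (init M) (traj M pol1 H)"

definition Jret :: "real \<Rightarrow> nat \<Rightarrow> ('s \<Rightarrow> 'a pmf) \<Rightarrow> ('s, 'a) mdp \<Rightarrow> real" where
  "Jret \<gamma> H pol1 M = measure_pmf.expectation (traj_law H M pol1)
      (\<lambda>\<omega>. \<Sum>j<length \<omega>. \<gamma> ^ j * fst (snd (snd (\<omega> ! j))))"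

text \<open>Empirical objective J_{M_{1:n}}(theta); m i is the i-th training MDP (i < n),
  Ka M theta is the adaptation kernel P_{phi|M,theta}, pol phi is the policy pi_phi.\<close>
definition emp_obj :: "real \<Rightarrow> nat \<Rightarrow> ('p \<Rightarrow> 's \<Rightarrow> 'a pmf) \<Rightarrow> (('s,'a) mdp \<Rightarrow> 't \<Rightarrow> 'p measure)
      \<Rightarrow> nat \<Rightarrow> (nat \<Rightarrow> ('s,'a) mdp) \<Rightarrow> 't \<Rightarrow> real" where
  "emp_obj \<gamma> H pol Ka n m \<theta> =
     (1 / real n) * (\<Sum>i<n. \<integral>\<phi>. Jret \<gamma> H (pol \<phi>) (m i) \<partial>(Ka (m i) \<theta>))"

definition pop_obj :: "real \<Rightarrow> nat \<Rightarrow> ('p \<Rightarrow> 's \<Rightarrow> 'a pmf) \<Rightarrow> (('s,'a) mdp \<Rightarrow> 't \<Rightarrow> 'p measure)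
      \<Rightarrow> ('s,'a) mdp measure \<Rightarrow> 't \<Rightarrow> real" where
  "pop_obj \<gamma> H pol Ka U \<theta> = (\<integral>M. (\<integral>\<phi>. Jret \<gamma> H (pol \<phi>) M \<partial>(Ka M \<theta>)) \<partial>U)"

definition joint_law :: "('s,'a) mdp measure \<Rightarrow> 't measure \<Rightarrow> 'p measure \<Rightarrow> nat
      \<Rightarrow> (nat \<Rightarrow> ('s,'a) mdp) measure \<Rightarrow> ((nat \<Rightarrow> ('s,'a) mdp) \<Rightarrow> 't measure)
      \<Rightarrow> (('s,'a) mdp \<Rightarrow> 't \<Rightarrow> 'p measure)
      \<Rightarrow> ((nat \<Rightarrow> ('s,'a) mdp) \<times> 't \<times> (nat \<Rightarrow> 'p)) measure" where
  "joint_law MSp \<Theta> \<Phi> n PM Kt Ka =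
     PM \<bind> (\<lambda>m. Kt m \<bind> (\<lambda>\<theta>.
       distr (PiM {..<n} (\<lambda>i. Ka (m i) \<theta>))
             (PiM {..<n} (\<lambda>_. MSp) \<Otimes>\<^sub>M (\<Theta> \<Otimes>\<^sub>M PiM {..<n} (\<lambda>_. \<Phi>)))
             (\<lambda>\<phi>. (m, \<theta>, \<phi>))))"

text \<open>D(P || Q); note the library's argument order KL_divergence b Q P.\<close>
definition KLdiv :: "'a measure \<Rightarrow> 'a measure \<Rightarrow> real" where
  "KLdiv P Q = KL_divergence (exp 1) Q P"

definition KL_finite :: "'a measure \<Rightarrow> 'a measure \<Rightarrow> bool" where
  "KL_finite P Q \<longleftrightarrow> absolutely_continuous Q P \<and> integrable P (entropy_density (exp 1) Q P)"

definition MI_finite :: "'c measure \<Rightarrow> 'a measure \<Rightarrow> 'b measure \<Rightarrow> ('c \<Rightarrow> 'a) \<Rightarrow> ('c \<Rightarrow> 'b) \<Rightarrow> bool" where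
  "MI_finite M S T X Y \<longleftrightarrow>
     KL_finite (distr M (S \<Otimes>\<^sub>M T) (\<lambda>x. (X x, Y x))) (distr M S X \<Otimes>\<^sub>M distr M T Y)"

end

theory Submission
  imports Defs
begin

(*
  Write W = (theta, phi_{1:n}) for the output of meta-learning and adaptation and Z = M_{1:n}
  for the training tasks. For fixed W the gap between empirical and population objective is
  an average of n independent terms with values in [0, 1/(1-gamma)] when Z is drawn from the
  testing environment, so Hoeffding's lemma bounds its exponential moments. The
  Donsker-Varadhan inequality transfers exponential moments from the decoupled law P_W x Q_Z
  to the joint law P_{WZ}, at the price D(P_{WZ} || P_W x P_Z) = I(W; Z) for decoupling and
  D(P_Z || Q_Z) for the change of environment. Optimising the scale of the exponent gives the
  square-root bound.
*)
lemma (in finite_measure) integrable_of_bounded: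
  fixes f :: "'a \<Rightarrow> real"
  assumes "f \<in> borel_measurable M" and "\<And>x. x \<in> space M \<Longrightarrow> \<bar>f x\<bar> \<le> C"
  shows "integrable M f"
  using assms by (intro integrable_const_bound[where B = C] AE_I2) auto

lemma (in prob_space) integral_bounds:
  fixes f :: "'a \<Rightarrow> real"
  assumes "f \<in> borel_measurable M" and "AE x in M. a \<le> f x \<and> f x \<le> b"
  shows "a \<le> (\<integral>x. f x \<partial>M) \<and> (\<integral>x. f x \<partial>M) \<le> b"
proof -
  have "integrable M f"
    using assms by (intro integrable_const_bound[where B = "max \<bar>a\<bar> \<bar>b\<bar>"]) auto
  with assms show ?thesis
    by (auto intro!: integral_ge_const integral_le_const)
qed

lemma (in prob_space) integral_exp_bounds:
  fixes f :: "'a \<Rightarrow> real"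
  assumes "f \<in> borel_measurable M" and "\<And>x. x \<in> space M \<Longrightarrow> \<bar>f x\<bar> \<le> C"
  shows "exp (- C) \<le> (\<integral>x. exp (f x) \<partial>M) \<and> (\<integral>x. exp (f x) \<partial>M) \<le> exp C"
  using assms by (intro integral_bounds AE_I2) (force simp: abs_le_iff)+

lemma (in prob_space) abs_ln_integral_exp_le:
  fixes f :: "'a \<Rightarrow> real"
  assumes "f \<in> borel_measurable M" and "\<And>x. x \<in> space M \<Longrightarrow> \<bar>f x\<bar> \<le> C"
  shows "\<bar>ln (\<integral>x. exp (f x) \<partial>M)\<bar> \<le> C"
proof -
  have "- C \<le> ln (\<integral>x. exp (f x) \<partial>M) \<and> ln (\<integral>x. exp (f x) \<partial>M) \<le> C"
    using integral_exp_bounds[OF assms]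
    by (metis exp_gt_zero ln_exp ln_le_cancel_iff order_less_le_trans)
  then show ?thesis by linarith
qed

lemma measurable_integral_kernel:
  fixes f :: "'a \<Rightarrow> 'b \<Rightarrow> real"
  assumes K[measurable]: "K \<in> A \<rightarrow>\<^sub>M subprob_algebra B"
    and f[measurable]: "(\<lambda>(a, b). f a b) \<in> borel_measurable (A \<Otimes>\<^sub>M B)"
  shows "(\<lambda>a. \<integral>b. f a b \<partial>K a) \<in> borel_measurable A"
proof -
  have "(\<lambda>a. distr (K a) (A \<Otimes>\<^sub>M B) (Pair a)) \<in> A \<rightarrow>\<^sub>M subprob_algebra (A \<Otimes>\<^sub>M B)"
    by (rule measurable_distr2[where f = Pair]) measurable
  from measurable_compose[OF this integral_measurable_subprob_algebra[OF f]]
  have "(\<lambda>a. \<integral>p. (case p of (a, b) \<Rightarrow> f a b) \<partial>distr (K a) (A \<Otimes>\<^sub>M B) (Pair a)) \<in> borel_measurable A" .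
  moreover have "(\<integral>p. (case p of (a, b) \<Rightarrow> f a b) \<partial>distr (K a) (A \<Otimes>\<^sub>M B) (Pair a)) = (\<integral>b. f a b \<partial>K a)"
    if "a \<in> space A" for a
    using subprob_measurableD(2)[OF K that] that by (subst integral_distr) auto
  ultimately show ?thesis
    by (simp cong: measurable_cong)
qed

lemma measurable_PiM_prob_algebra:
  fixes K :: "'i \<Rightarrow> 'a \<Rightarrow> 'b measure"
  assumes I: "finite I" and K: "\<And>i. i \<in> I \<Longrightarrow> K i \<in> M \<rightarrow>\<^sub>M prob_algebra N"
  shows "(\<lambda>x. PiM I (\<lambda>i. K i x)) \<in> M \<rightarrow>\<^sub>M prob_algebra (PiM I (\<lambda>_. N))"
proof -
  have Kx: "prob_space (K i x)" "sets (K i x) = sets N" if "i \<in> I" "x \<in> space M" for i x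
    using measurable_space[OF K that(2)] that(1) by (simp_all add: space_prob_algebra)
  show ?thesis
  proof (rule measurable_prob_algebra_generated[OF sets_PiM Int_stable_prod_algebra prod_algebra_sets_into_space])
    fix x assume x: "x \<in> space M"
    show "prob_space (PiM I (\<lambda>i. K i x))"
      using Kx x by (intro prob_space_PiM) auto
    show "sets (PiM I (\<lambda>i. K i x)) = sets (PiM I (\<lambda>_. N))"
      using Kx x by (intro sets_PiM_cong) auto
  next
    fix A assume "A \<in> prod_algebra I (\<lambda>_. N)"
    then obtain X where A: "A = (\<Pi>\<^sub>E i\<in>I. X i)" and X: "X \<in> (\<Pi> i\<in>I. sets N)"
      unfolding prod_algebra_eq_finite[OF I] by auto
    have "emeasure (PiM I (\<lambda>i. K i x)) A = (\<Prod>i\<in>I. emeasure (K i x) (X i))" if x: "x \<in> space M" for x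
    proof -
      interpret product_sigma_finite "\<lambda>i. if i \<in> I then K i x else count_space {}"
        using Kx x by (auto simp: product_sigma_finite_def
            intro: prob_space_imp_sigma_finite sigma_finite_measure_count_space_finite)
      have "PiM I (\<lambda>i. K i x) = PiM I (\<lambda>i. if i \<in> I then K i x else count_space {})"
        by (rule PiM_cong) auto
      also have "emeasure \<dots> A = (\<Prod>i\<in>I. emeasure (if i \<in> I then K i x else count_space {}) (X i))"
        unfolding A using X Kx x by (intro emeasure_PiM[OF I]) auto
      finally show ?thesis
        by simp
    qed
    moreover have "(\<lambda>x. \<Prod>i\<in>I. emeasure (K i x) (X i)) \<in> borel_measurable M"
      using X by (intro borel_measurable_prod_ennreal measurable_emeasure_kernel[OF measurable_prob_algebraD[OF K]]) auto
    ultimately show "(\<lambda>x. emeasure (PiM I (\<lambda>i. K i x)) A) \<in> borel_measurable M"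
      by (simp cong: measurable_cong)
  qed
qed

section \<open>Donsker--Varadhan and decoupling\<close>

lemma integral_le_KLdiv_add_ln_integral_exp:
  fixes f :: "'a \<Rightarrow> real"
  assumes P: "prob_space P" and Q: "prob_space Q" and sets: "sets P = sets Q"
    and fin: "KL_finite P Q"
    and f[measurable]: "f \<in> borel_measurable Q" and bnd: "\<And>x. x \<in> space Q \<Longrightarrow> \<bar>f x\<bar> \<le> C"
  shows "(\<integral>x. f x \<partial>P) \<le> KLdiv P Q + ln (\<integral>x. exp (f x) \<partial>Q)"
proof -
  interpret Q: prob_space Q by fact
  interpret P: prob_space P by fact
  have ac: "absolutely_continuous Q P" and int_ln: "integrable P (entropy_density (exp 1) Q P)"
    using fin unfolding KL_finite_def by auto
  have sf: "sigma_finite_measure P" ..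
  define r where "r = (\<lambda>x. enn2real (RN_deriv Q P x))"
  have r[measurable]: "r \<in> borel_measurable Q"
    unfolding r_def by measurable
  have "entropy_density (exp 1) Q P = (\<lambda>x. ln (r x))"
    by (auto simp: entropy_density_def r_def log_def)
  then have KL: "KLdiv P Q = (\<integral>x. ln (r x) \<partial>P)" and int_ln: "integrable P (\<lambda>x. ln (r x))"
    using int_ln unfolding KLdiv_def KL_divergence_def by auto
  have int_f: "integrable P f"
    using bnd by (intro P.integrable_of_bounded)
      (simp_all add: measurable_cong_sets[OF sets refl] sets_eq_imp_space_eq[OF sets])
  have int_r: "integrable Q r" and r_1: "(\<integral>x. r x \<partial>Q) = 1"
    using Q.RN_deriv_integrable[OF sf ac sets, of "\<lambda>_. 1"] Q.RN_deriv_integral[OF sf ac sets, of "\<lambda>_. 1"]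
    unfolding r_def by (simp_all add: P.prob_space)
  define Z where "Z = (\<integral>x. exp (f x) \<partial>Q)"
  have int_exp: "integrable Q (\<lambda>x. exp (f x))"
    by (intro Q.integrable_of_bounded[where C = "exp C"]) (auto dest!: bnd simp: abs_le_iff)
  have Z: "0 < Z"
    using Q.integral_exp_bounds[OF f bnd] unfolding Z_def by (meson exp_gt_zero less_le_trans)
  have "(\<integral>x. f x \<partial>P) - KLdiv P Q - ln Z = (\<integral>x. f x - ln (r x) - ln Z \<partial>P)"
    unfolding KL using int_f int_ln by (simp add: P.prob_space)
  also have "\<dots> = (\<integral>x. r x * (f x - ln (r x) - ln Z) \<partial>Q)"
    unfolding r_def by (rule Q.RN_deriv_integral[OF sf ac sets]) measurable
  also have "\<dots> \<le> (\<integral>x. exp (f x) / Z - r x \<partial>Q)"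
  proof (rule integral_mono)
    show "integrable Q (\<lambda>x. r x * (f x - ln (r x) - ln Z))"
      using Q.RN_deriv_integrable[OF sf ac sets, of "\<lambda>x. f x - ln (r x) - ln Z"] int_f int_ln
      unfolding r_def by simp
    show "integrable Q (\<lambda>x. exp (f x) / Z - r x)"
      using int_exp int_r by auto
    show "r x * (f x - ln (r x) - ln Z) \<le> exp (f x) / Z - r x" for x
    proof (cases "r x = 0")
      case False
      then have "0 < r x" by (simp add: r_def order_le_neq_trans)
      \<comment> \<open>\<open>ln t \<le> t - 1\<close> at \<open>t = exp (f x) / (Z * r x)\<close>\<close>
      moreover have "ln (exp (f x) / (Z * r x)) \<le> exp (f x) / (Z * r x) - 1"
        using \<open>0 < r x\<close> Z by (intro ln_le_minus_one) simp
      ultimately show ?thesis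
        using Z by (simp add: ln_div ln_mult field_simps)
    qed (use Z in simp)
  qed
  also have "\<dots> = 0"
    using int_exp int_r r_1 Z by (simp add: Z_def)
  finally show ?thesis
    unfolding Z_def by simp
qed

lemma KLdiv_nonneg:
  assumes "prob_space P" "prob_space Q" "sets P = sets Q" "KL_finite P Q"
  shows "0 \<le> KLdiv P Q"
  using integral_le_KLdiv_add_ln_integral_exp[OF assms, of "\<lambda>_. 0" 0]
  by (simp add: prob_space.prob_space[OF assms(2)])

lemma (in prob_space) mutual_information_nonneg:
  assumes "X \<in> measurable M S" "Y \<in> measurable M T" "MI_finite M S T X Y"
  shows "0 \<le> mutual_information (exp 1) S T X Y"
  unfolding mutual_information_def KLdiv_def[symmetric]
  using assms unfolding MI_finite_def
  by (intro KLdiv_nonneg prob_space_distr prob_space_pair) auto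

lemma integral_le_KLdiv_product_add_integral_ln:
  fixes F :: "'x \<Rightarrow> 'y \<Rightarrow> real"
  assumes PXY: "prob_space PXY" and PX: "prob_space PX" and PY: "prob_space PY"
    and sets: "sets PXY = sets (PX \<Otimes>\<^sub>M PY)" and fin: "KL_finite PXY (PX \<Otimes>\<^sub>M PY)"
    and F[measurable]: "(\<lambda>(x, y). F x y) \<in> borel_measurable (PX \<Otimes>\<^sub>M PY)"
    and bnd: "\<And>x y. x \<in> space PX \<Longrightarrow> y \<in> space PY \<Longrightarrow> \<bar>F x y\<bar> \<le> C"
  shows "(\<integral>p. F (fst p) (snd p) \<partial>PXY)
           \<le> KLdiv PXY (PX \<Otimes>\<^sub>M PY) + (\<integral>p. ln (\<integral>x. exp (F x (snd p)) \<partial>PX) \<partial>PXY)"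
proof -
  interpret PX: prob_space PX by fact
  interpret PY: prob_space PY by fact
  interpret PXY: prob_space PXY by fact
  interpret pair_prob_space PX PY ..
  define Z where "Z = (\<lambda>y. \<integral>x. exp (F x y) \<partial>PX)"
  have [measurable]: "Z \<in> borel_measurable PY"
    unfolding Z_def by (rule PX.borel_measurable_lebesgue_integral) measurable
  have Z: "exp (- C) \<le> Z y \<and> Z y \<le> exp C" and lnZ: "\<bar>ln (Z y)\<bar> \<le> C" if "y \<in> space PY" for y
    using PX.integral_exp_bounds[of "\<lambda>x. F x y"] PX.abs_ln_integral_exp_le[of "\<lambda>x. F x y"] bnd that
    unfolding Z_def by (auto simp: measurable_Pair1')
  \<comment> \<open>subtracting the log-partition function makes \<open>exp G\<close> a density w.r.t. \<open>PX \<Otimes>\<^sub>M PY\<close>\<close>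
  define G where "G = (\<lambda>x y. F x y - ln (Z y))"
  have G_meas[measurable]: "(\<lambda>(x, y). G x y) \<in> borel_measurable (PX \<Otimes>\<^sub>M PY)"
    unfolding G_def by measurable
  have G_bnd: "\<bar>G x y\<bar> \<le> 2 * C" if "x \<in> space PX" "y \<in> space PY" for x y
    using bnd[OF that] lnZ[OF that(2)] unfolding G_def by linarith
  have "integrable (PX \<Otimes>\<^sub>M PY) (\<lambda>(x, y). exp (G x y))"
    by (intro P.integrable_of_bounded[where C = "exp (2 * C)"])
      (auto simp: space_pair_measure dest!: G_bnd abs_le_D1)
  then have "(\<integral>p. exp (G (fst p) (snd p)) \<partial>(PX \<Otimes>\<^sub>M PY)) = (\<integral>y. \<integral>x. exp (G x y) \<partial>PX \<partial>PY)"
    by (simp add: integral_snd split_beta')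
  also have "\<dots> = (\<integral>y. 1 \<partial>PY)"
  proof (rule Bochner_Integration.integral_cong[OF refl])
    fix y assume "y \<in> space PY"
    then have "0 < Z y" using Z by (meson exp_gt_zero less_le_trans)
    then show "(\<integral>x. exp (G x y) \<partial>PX) = 1"
      by (simp add: G_def exp_diff Z_def)
  qed
  finally have "(\<integral>p. exp (G (fst p) (snd p)) \<partial>(PX \<Otimes>\<^sub>M PY)) = 1"
    by (simp add: PY.prob_space)
  moreover have "(\<integral>p. G (fst p) (snd p) \<partial>PXY)
      \<le> KLdiv PXY (PX \<Otimes>\<^sub>M PY) + ln (\<integral>p. exp (G (fst p) (snd p)) \<partial>(PX \<Otimes>\<^sub>M PY))"
    using G_bnd by (intro integral_le_KLdiv_add_ln_integral_exp[OF PXY P.prob_space_axioms sets fin, where C = "2 * C"])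
      (auto simp: space_pair_measure)
  moreover have "(\<integral>p. F (fst p) (snd p) \<partial>PXY) = (\<integral>p. G (fst p) (snd p) \<partial>PXY) + (\<integral>p. ln (Z (snd p)) \<partial>PXY)"
  proof -
    have space: "space PXY = space (PX \<Otimes>\<^sub>M PY)"
      by (rule sets_eq_imp_space_eq[OF sets])
    have "integrable PXY (\<lambda>p. G (fst p) (snd p))" "integrable PXY (\<lambda>p. ln (Z (snd p)))"
      using G_bnd lnZ by (auto intro!: PXY.integrable_of_bounded
          simp: measurable_cong_sets[OF sets refl] space space_pair_measure split_beta')
    then show ?thesis
      by (simp flip: Bochner_Integration.integral_add add: G_def)
  qed
  ultimately show ?thesis
    unfolding Z_def by simp
qed

lemma ln_integral_integral_exp_le:
  fixes F :: "'x \<Rightarrow> 'y \<Rightarrow> real"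
  assumes PX: "prob_space PX" and QY: "prob_space QY"
    and F[measurable]: "(\<lambda>(x, y). F x y) \<in> borel_measurable (PX \<Otimes>\<^sub>M QY)"
    and bnd: "\<And>x y. x \<in> space PX \<Longrightarrow> y \<in> space QY \<Longrightarrow> \<bar>F x y\<bar> \<le> C"
    and mgf: "\<And>x. x \<in> space PX \<Longrightarrow> (\<integral>\<^sup>+y. exp (F x y) \<partial>QY) \<le> exp b"
  shows "ln (\<integral>y. \<integral>x. exp (F x y) \<partial>PX \<partial>QY) \<le> b"
proof -
  interpret PX: prob_space PX by fact
  interpret QY: prob_space QY by fact
  interpret pair_prob_space PX QY ..
  have int: "integrable (PX \<Otimes>\<^sub>M QY) (\<lambda>(x, y). exp (F x y))"
    by (intro P.integrable_of_bounded[where C = "exp C"])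
      (auto simp: space_pair_measure dest!: bnd abs_le_D1)
  have "exp (- C) \<le> (\<integral>p. exp (F (fst p) (snd p)) \<partial>(PX \<Otimes>\<^sub>M QY))"
    using P.integral_exp_bounds[of "\<lambda>p. F (fst p) (snd p)" C] bnd
    by (auto simp: space_pair_measure split_beta')
  also have "\<dots> = (\<integral>y. \<integral>x. exp (F x y) \<partial>PX \<partial>QY)"
    using integral_snd[OF int] by (simp add: split_beta')
  finally have pos: "0 < (\<integral>y. \<integral>x. exp (F x y) \<partial>PX \<partial>QY)"
    by (meson exp_gt_zero less_le_trans)
  have "(\<integral>y. \<integral>x. exp (F x y) \<partial>PX \<partial>QY) = (\<integral>x. \<integral>y. exp (F x y) \<partial>QY \<partial>PX)"
    by (rule Fubini_integral[OF int])
  also have "\<dots> \<le> exp b"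
  proof (rule PX.integral_le_const[OF integrable_fst[OF int]], rule AE_I2)
    fix x assume x: "x \<in> space PX"
    have "integrable QY (\<lambda>y. exp (F x y))"
      using x by (intro QY.integrable_of_bounded[where C = "exp C"]) (auto dest!: bnd abs_le_D1)
    then have "ennreal (\<integral>y. exp (F x y) \<partial>QY) = (\<integral>\<^sup>+y. exp (F x y) \<partial>QY)"
      by (simp add: nn_integral_eq_integral)
    also have "\<dots> \<le> exp b"
      by (rule mgf[OF x])
    finally show "(\<integral>y. exp (F x y) \<partial>QY) \<le> exp b"
      by simp
  qed
  finally show ?thesis
    using pos by (metis exp_gt_zero ln_exp ln_le_cancel_iff)
qed

lemma decoupling_inequality:
  fixes J :: "('y \<times> 'x) measure" and F :: "'x \<Rightarrow> 'y \<Rightarrow> real"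
  assumes J: "prob_space J" "sets J = sets (SY \<Otimes>\<^sub>M SX)"
    and QY: "prob_space QY" "sets QY = sets SY"
    and F[measurable]: "(\<lambda>(x, y). F x y) \<in> borel_measurable (SX \<Otimes>\<^sub>M SY)"
    and bnd: "\<And>x y. x \<in> space SX \<Longrightarrow> y \<in> space SY \<Longrightarrow> \<bar>F x y\<bar> \<le> C"
    and MI: "MI_finite J SX SY snd fst" and KL: "KL_finite (distr J SY fst) QY"
  shows "(\<integral>z. F (snd z) (fst z) \<partial>J)
           \<le> prob_space.mutual_information J (exp 1) SX SY snd fst + KLdiv (distr J SY fst) QY
             + ln (\<integral>y. \<integral>x. exp (F x y) \<partial>distr J SX snd \<partial>QY)"
proof -
  interpret J: prob_space J by fact
  have [measurable]: "fst \<in> J \<rightarrow>\<^sub>M SY" "snd \<in> J \<rightarrow>\<^sub>M SX"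
    by (simp_all add: measurable_cong_sets[OF J(2) refl])
  define PX where "PX = distr J SX snd"
  define PY where "PY = distr J SY fst"
  define PXY where "PXY = distr J (SX \<Otimes>\<^sub>M SY) (\<lambda>z. (snd z, fst z))"
  have PX: "prob_space PX" and PY: "prob_space PY" and PXY: "prob_space PXY"
    unfolding PX_def PY_def PXY_def by (auto intro!: J.prob_space_distr)
  interpret PX: prob_space PX by fact
  have sets: "sets PXY = sets (PX \<Otimes>\<^sub>M PY)"
    unfolding PXY_def PX_def PY_def by (simp cong: sets_pair_measure_cong)
  have I: "prob_space.mutual_information J (exp 1) SX SY snd fst = KLdiv PXY (PX \<Otimes>\<^sub>M PY)"
    unfolding J.mutual_information_def KLdiv_def PXY_def PX_def PY_def ..
  define k where "k = (\<lambda>y. ln (\<integral>x. exp (F x y) \<partial>PX))"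
  have [measurable]: "k \<in> borel_measurable SY"
    unfolding k_def
    by (intro borel_measurable_ln PX.borel_measurable_lebesgue_integral) (simp add: PX_def)
  have k_bnd: "\<bar>k y\<bar> \<le> C" if "y \<in> space SY" for y
    unfolding k_def using that bnd
    by (intro PX.abs_ln_integral_exp_le) (auto simp: PX_def)
  have "(\<integral>z. F (snd z) (fst z) \<partial>J) = (\<integral>p. F (fst p) (snd p) \<partial>PXY)"
    unfolding PXY_def by (subst integral_distr) (auto simp: split_beta')
  also have "\<dots> \<le> KLdiv PXY (PX \<Otimes>\<^sub>M PY) + (\<integral>p. k (snd p) \<partial>PXY)"
    unfolding k_def
  proof (rule integral_le_KLdiv_product_add_integral_ln[OF PXY PX PY sets])
    show "KL_finite PXY (PX \<Otimes>\<^sub>M PY)"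
      using MI unfolding MI_finite_def PXY_def PX_def PY_def .
    show "(\<lambda>(x, y). F x y) \<in> borel_measurable (PX \<Otimes>\<^sub>M PY)"
      unfolding PX_def PY_def by measurable
  qed (use bnd in \<open>auto simp: PX_def PY_def\<close>)
  also have "(\<integral>p. k (snd p) \<partial>PXY) = (\<integral>y. k y \<partial>PY)"
    unfolding PXY_def PY_def by (simp add: integral_distr)
  also have "\<dots> \<le> KLdiv PY QY + ln (\<integral>y. exp (k y) \<partial>QY)"
    using k_bnd QY by (intro integral_le_KLdiv_add_ln_integral_exp[OF PY QY(1) _ KL[folded PY_def]])
      (auto simp: PY_def measurable_cong_sets[OF QY(2) refl] sets_eq_imp_space_eq[OF QY(2)])
  also have "(\<integral>y. exp (k y) \<partial>QY) = (\<integral>y. \<integral>x. exp (F x y) \<partial>PX \<partial>QY)"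
  proof (rule Bochner_Integration.integral_cong[OF refl])
    fix y assume "y \<in> space QY"
    then have "exp (- C) \<le> (\<integral>x. exp (F x y) \<partial>PX)"
      using bnd PX.integral_exp_bounds[of "\<lambda>x. F x y" C]
      by (auto simp: PX_def sets_eq_imp_space_eq[OF QY(2)])
    then show "exp (k y) = (\<integral>x. exp (F x y) \<partial>PX)"
      unfolding k_def by (meson exp_gt_zero exp_ln less_le_trans)
  qed
  finally show ?thesis
    unfolding I PX_def PY_def by simp
qed

lemma le_2_sqrt_of_forall_pos_mult_le:
  fixes E V s :: real
  assumes "0 < s" "0 \<le> V" and bound: "\<And>l. 0 < l \<Longrightarrow> l * E \<le> V + l\<^sup>2 * s"
  shows "E \<le> 2 * sqrt (s * V)"
proof (cases "E \<le> 0")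
  case True
  moreover have "0 \<le> sqrt (s * V)"
    using assms by simp
  ultimately show ?thesis
    by linarith
next
  case False
  \<comment> \<open>\<open>l = E / (2 * s)\<close> instead of the minimiser \<open>sqrt (V / s)\<close>, which is useless for \<open>V = 0\<close>\<close>
  have "E / (2 * s) * E \<le> V + (E / (2 * s))\<^sup>2 * s"
    using False \<open>0 < s\<close> by (intro bound) simp
  then have "E\<^sup>2 \<le> 4 * s * V"
    using \<open>0 < s\<close> by (simp add: power2_eq_square field_simps)
  then have "E \<le> sqrt (4 * s * V)"
    by (rule real_le_rsqrt)
  then show ?thesis
    by (simp add: real_sqrt_mult)
qed

lemma integral_le_2_sqrt_information_of_subgaussian:
  fixes J :: "('y \<times> 'x) measure" and g :: "'x \<Rightarrow> 'y \<Rightarrow> real"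
  assumes J: "prob_space J" "sets J = sets (SY \<Otimes>\<^sub>M SX)"
    and QY: "prob_space QY" "sets QY = sets SY"
    and g[measurable]: "(\<lambda>(x, y). g x y) \<in> borel_measurable (SX \<Otimes>\<^sub>M SY)"
    and bnd: "\<And>x y. x \<in> space SX \<Longrightarrow> y \<in> space SY \<Longrightarrow> \<bar>g x y\<bar> \<le> c"
    and s: "0 < s"
    and subgaussian: "\<And>x l. x \<in> space SX \<Longrightarrow> 0 < l \<Longrightarrow> (\<integral>\<^sup>+y. exp (l * g x y) \<partial>QY) \<le> exp (l\<^sup>2 * s)"
    and MI: "MI_finite J SX SY snd fst" and KL: "KL_finite (distr J SY fst) QY"
  shows "(\<integral>z. g (snd z) (fst z) \<partial>J)
           \<le> 2 * sqrt (s * (prob_space.mutual_information J (exp 1) SX SY snd fst + KLdiv (distr J SY fst) QY))"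
proof (rule le_2_sqrt_of_forall_pos_mult_le[OF s])
  interpret J: prob_space J by fact
  have [measurable]: "fst \<in> J \<rightarrow>\<^sub>M SY" "snd \<in> J \<rightarrow>\<^sub>M SX"
    by (simp_all add: measurable_cong_sets[OF J(2) refl])
  have "0 \<le> J.mutual_information (exp 1) SX SY snd fst"
    by (rule J.mutual_information_nonneg[OF _ _ MI]) measurable
  moreover have "0 \<le> KLdiv (distr J SY fst) QY"
    by (rule KLdiv_nonneg[OF J.prob_space_distr QY(1) _ KL]) (simp_all add: QY(2))
  ultimately show "0 \<le> J.mutual_information (exp 1) SX SY snd fst + KLdiv (distr J SY fst) QY"
    by simp
  fix l :: real assume l: "0 < l"
  have lg_bnd: "\<bar>l * g x y\<bar> \<le> l * c" if "x \<in> space SX" "y \<in> space SY" for x y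
    using bnd[OF that] l by (simp add: abs_mult mult_left_mono)
  have "ln (\<integral>y. \<integral>x. exp (l * g x y) \<partial>distr J SX snd \<partial>QY) \<le> l\<^sup>2 * s"
  proof (rule ln_integral_integral_exp_le)
    have sets: "sets (distr J SX snd \<Otimes>\<^sub>M QY) = sets (SX \<Otimes>\<^sub>M SY)"
      using QY(2) by (simp cong: sets_pair_measure_cong)
    show "(\<lambda>(x, y). l * g x y) \<in> borel_measurable (distr J SX snd \<Otimes>\<^sub>M QY)"
      unfolding measurable_cong_sets[OF sets refl] by measurable
    show "\<bar>l * g x y\<bar> \<le> l * c" if "x \<in> space (distr J SX snd)" "y \<in> space QY" for x y
      using lg_bnd that by (simp add: sets_eq_imp_space_eq[OF QY(2)])
    show "(\<integral>\<^sup>+y. exp (l * g x y) \<partial>QY) \<le> exp (l\<^sup>2 * s)" if "x \<in> space (distr J SX snd)" for x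
      using subgaussian[OF _ l] that by simp
    show "prob_space (distr J SX snd)"
      by (rule J.prob_space_distr) measurable
  qed (rule QY(1))
  moreover have "(\<integral>z. l * g (snd z) (fst z) \<partial>J) \<le> J.mutual_information (exp 1) SX SY snd fst
      + KLdiv (distr J SY fst) QY + ln (\<integral>y. \<integral>x. exp (l * g x y) \<partial>distr J SX snd \<partial>QY)"
    by (rule decoupling_inequality[OF J QY _ lg_bnd MI KL]) measurable
  ultimately show "l * (\<integral>z. g (snd z) (fst z) \<partial>J)
      \<le> J.mutual_information (exp 1) SX SY snd fst + KLdiv (distr J SY fst) QY + l\<^sup>2 * s"
    by simp
qed

section \<open>Hoeffding's lemma for empirical means\<close>

lemma nn_integral_exp_empirical_mean_le:
  fixes h :: "'m \<Rightarrow> real" and n :: nat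
  assumes U: "prob_space U" and h[measurable]: "h \<in> borel_measurable U"
    and h_bnd: "\<And>M. M \<in> space U \<Longrightarrow> a \<le> h M \<and> h M \<le> b" and n: "0 < n" and l: "0 < l"
  shows "(\<integral>\<^sup>+y. exp (l * ((1 / real n) * (\<Sum>i<n. h (y i)) - (\<integral>M. h M \<partial>U))) \<partial>PiM {..<n} (\<lambda>_. U))
           \<le> exp (l\<^sup>2 * (b - a)\<^sup>2 / (8 * real n))"
proof -
  interpret U: prob_space U by fact
  interpret product_sigma_finite "\<lambda>_. U" ..
  interpret h: interval_bounded_random_variable U h a b
    by unfold_locales (auto dest: h_bnd)
  define \<mu> where "\<mu> = (\<integral>M. h M \<partial>U)"
  have "(\<integral>\<^sup>+y. exp (l * ((1 / real n) * (\<Sum>i<n. h (y i)) - \<mu>)) \<partial>PiM {..<n} (\<lambda>_. U))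
      = (\<integral>\<^sup>+y. (\<Prod>i<n. ennreal (exp (l / n * (h (y i) - \<mu>)))) \<partial>PiM {..<n} (\<lambda>_. U))"
  proof (rule nn_integral_cong)
    fix y :: "nat \<Rightarrow> 'm"
    have "(\<Sum>i<n. l / n * (h (y i) - \<mu>)) = l / n * (\<Sum>i<n. h (y i)) - real n * (l / n * \<mu>)"
      by (simp add: right_diff_distrib sum_subtractf sum_distrib_left)
    also have "\<dots> = l * ((1 / real n) * (\<Sum>i<n. h (y i)) - \<mu>)"
      using n by (simp add: field_simps)
    finally have "l * ((1 / real n) * (\<Sum>i<n. h (y i)) - \<mu>) = (\<Sum>i<n. l / n * (h (y i) - \<mu>))" ..
    then show "ennreal (exp (l * ((1 / real n) * (\<Sum>i<n. h (y i)) - \<mu>)))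
        = (\<Prod>i<n. ennreal (exp (l / n * (h (y i) - \<mu>))))"
      by (simp add: exp_sum prod_ennreal)
  qed
  also have "\<dots> = (\<Prod>i<n. \<integral>\<^sup>+M. ennreal (exp (l / n * (h M - \<mu>))) \<partial>U)"
    by (rule product_nn_integral_prod) auto
  also have "\<dots> \<le> (\<Prod>i<n. ennreal (exp ((l / n)\<^sup>2 * (b - a)\<^sup>2 / 8)))"
    using h.Hoeffdings_lemma_nn_integral[of "l / n"] l n
    by (intro prod_mono_ennreal) (simp add: \<mu>_def)
  also have "\<dots> = exp (l\<^sup>2 * (b - a)\<^sup>2 / (8 * real n))"
  proof -
    have "(\<Prod>i<n. exp ((l / n)\<^sup>2 * (b - a)\<^sup>2 / 8)) = exp (real n * ((l / n)\<^sup>2 * (b - a)\<^sup>2 / 8))"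
      by (simp add: exp_of_nat_mult[symmetric])
    also have "real n * ((l / n)\<^sup>2 * (b - a)\<^sup>2 / 8) = l\<^sup>2 * (b - a)\<^sup>2 / (8 * real n)"
      using n by (simp add: power2_eq_square field_simps)
    finally show ?thesis
      by (simp add: prod_ennreal ennreal_power)
  qed
  finally show ?thesis
    by (simp add: \<mu>_def)
qed

section \<open>Returns of valid MDPs\<close>

lemma set_pmf_traj:
  assumes "valid_mdp M" and "\<omega> \<in> set_pmf (traj M pol1 h s)"
  shows "length \<omega> = Suc h \<and> (\<forall>e\<in>set \<omega>. fst (snd (snd e)) \<in> {0..1})"
  using assms(2)
proof (induction h arbitrary: s \<omega>)
  case 0
  then show ?case using assms(1) by (auto simp: valid_mdp_def)
next
  case (Suc h)
  then show ?case using assms(1) by (fastforce simp: valid_mdp_def)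
qed

lemma discounted_sum_bounds:
  fixes \<gamma> :: real and r :: "nat \<Rightarrow> real"
  assumes "0 \<le> \<gamma>" "\<gamma> < 1" and "\<And>j. j < N \<Longrightarrow> r j \<in> {0..1}"
  shows "0 \<le> (\<Sum>j<N. \<gamma> ^ j * r j) \<and> (\<Sum>j<N. \<gamma> ^ j * r j) \<le> 1 / (1 - \<gamma>)"
proof
  show "0 \<le> (\<Sum>j<N. \<gamma> ^ j * r j)"
    using assms by (intro sum_nonneg) auto
  have "(\<Sum>j<N. \<gamma> ^ j * r j) \<le> (\<Sum>j<N. \<gamma> ^ j)"
    using assms by (intro sum_mono) (auto intro!: mult_left_le)
  also have "\<dots> = (1 - \<gamma> ^ N) / (1 - \<gamma>)"
    using assms by (subst sum_gp_strict) auto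
  also have "\<dots> \<le> 1 / (1 - \<gamma>)"
    using assms by (intro divide_right_mono) auto
  finally show "(\<Sum>j<N. \<gamma> ^ j * r j) \<le> 1 / (1 - \<gamma>)" .
qed

lemma Jret_bounds:
  assumes "valid_mdp M" and "0 \<le> \<gamma>" "\<gamma> < 1"
  shows "0 \<le> Jret \<gamma> H pol1 M \<and> Jret \<gamma> H pol1 M \<le> 1 / (1 - \<gamma>)"
  unfolding Jret_def
proof (intro measure_pmf.integral_bounds)
  show "AE \<omega> in traj_law H M pol1. 0 \<le> (\<Sum>j<length \<omega>. \<gamma> ^ j * fst (snd (snd (\<omega> ! j))))
      \<and> (\<Sum>j<length \<omega>. \<gamma> ^ j * fst (snd (snd (\<omega> ! j)))) \<le> 1 / (1 - \<gamma>)"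
  proof (unfold AE_measure_pmf_iff traj_law_def set_bind_pmf, intro ballI)
    fix \<omega> assume "\<omega> \<in> (\<Union>s\<in>set_pmf (init M). set_pmf (traj M pol1 H s))"
    then have "length \<omega> = Suc H \<and> (\<forall>e\<in>set \<omega>. fst (snd (snd e)) \<in> {0..1})"
      using set_pmf_traj[OF assms(1)] by blast
    then show "0 \<le> (\<Sum>j<length \<omega>. \<gamma> ^ j * fst (snd (snd (\<omega> ! j))))
        \<and> (\<Sum>j<length \<omega>. \<gamma> ^ j * fst (snd (snd (\<omega> ! j)))) \<le> 1 / (1 - \<gamma>)"
      using assms(2,3) by (intro discounted_sum_bounds) auto
  qed
qed simp

section \<open>The joint law of tasks, meta-parameters and adapted parameters\<close>

lemma measurable_PiM_adaptation_kernel: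
  fixes n :: nat
  assumes Ka: "(\<lambda>(M, \<theta>). Ka M \<theta>) \<in> MSp \<Otimes>\<^sub>M \<Theta> \<rightarrow>\<^sub>M prob_algebra \<Phi>"
  shows "(\<lambda>x. PiM {..<n} (\<lambda>i. Ka (fst x i) (snd x)))
           \<in> PiM {..<n} (\<lambda>_. MSp) \<Otimes>\<^sub>M \<Theta> \<rightarrow>\<^sub>M prob_algebra (PiM {..<n} (\<lambda>_. \<Phi>))"
proof (intro measurable_PiM_prob_algebra finite_lessThan)
  fix i assume "i \<in> {..<n}"
  then have "(\<lambda>x. (fst x i, snd x)) \<in> PiM {..<n} (\<lambda>_. MSp) \<Otimes>\<^sub>M \<Theta> \<rightarrow>\<^sub>M MSp \<Otimes>\<^sub>M \<Theta>"
    by measurable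
  from measurable_compose[OF this Ka]
  show "(\<lambda>x. Ka (fst x i) (snd x)) \<in> PiM {..<n} (\<lambda>_. MSp) \<Otimes>\<^sub>M \<Theta> \<rightarrow>\<^sub>M prob_algebra \<Phi>"
    by simp
qed

lemma measurable_joint_law_kernel:
  fixes n :: nat
  assumes Kt: "Kt \<in> PiM {..<n} (\<lambda>_. MSp) \<rightarrow>\<^sub>M prob_algebra \<Theta>"
    and Ka: "(\<lambda>(M, \<theta>). Ka M \<theta>) \<in> MSp \<Otimes>\<^sub>M \<Theta> \<rightarrow>\<^sub>M prob_algebra \<Phi>"
  shows "(\<lambda>m. Kt m \<bind> (\<lambda>\<theta>. distr (PiM {..<n} (\<lambda>i. Ka (m i) \<theta>))
             (PiM {..<n} (\<lambda>_. MSp) \<Otimes>\<^sub>M (\<Theta> \<Otimes>\<^sub>M PiM {..<n} (\<lambda>_. \<Phi>))) (\<lambda>\<phi>. (m, \<theta>, \<phi>))))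
         \<in> PiM {..<n} (\<lambda>_. MSp) \<rightarrow>\<^sub>M prob_algebra (PiM {..<n} (\<lambda>_. MSp) \<Otimes>\<^sub>M (\<Theta> \<Otimes>\<^sub>M PiM {..<n} (\<lambda>_. \<Phi>)))"
  using Kt measurable_PiM_adaptation_kernel[OF Ka] by measurable

lemma distr_fst_joint_law_kernel:
  fixes n :: nat
  assumes Kt: "Kt \<in> PiM {..<n} (\<lambda>_. MSp) \<rightarrow>\<^sub>M prob_algebra \<Theta>"
    and Ka: "(\<lambda>(M, \<theta>). Ka M \<theta>) \<in> MSp \<Otimes>\<^sub>M \<Theta> \<rightarrow>\<^sub>M prob_algebra \<Phi>"
    and m: "m \<in> space (PiM {..<n} (\<lambda>_. MSp))"
  shows "distr (Kt m \<bind> (\<lambda>\<theta>. distr (PiM {..<n} (\<lambda>i. Ka (m i) \<theta>))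
             (PiM {..<n} (\<lambda>_. MSp) \<Otimes>\<^sub>M (\<Theta> \<Otimes>\<^sub>M PiM {..<n} (\<lambda>_. \<Phi>))) (\<lambda>\<phi>. (m, \<theta>, \<phi>))))
           (PiM {..<n} (\<lambda>_. MSp)) fst
         = return (PiM {..<n} (\<lambda>_. MSp)) m"
    (is "distr (Kt m \<bind> ?h) ?SY fst = _")
proof -
  note Ka_n = measurable_PiM_adaptation_kernel[OF Ka, where n = n]
  have [measurable]: "(\<lambda>\<theta>. PiM {..<n} (\<lambda>i. Ka (m i) \<theta>)) \<in> \<Theta> \<rightarrow>\<^sub>M prob_algebra (PiM {..<n} (\<lambda>_. \<Phi>))"
    using measurable_Pair2[OF Ka_n m] by simp
  have Kt_m: "prob_space (Kt m)" "sets (Kt m) = sets \<Theta>"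
    using measurable_space[OF Kt m] by (simp_all add: space_prob_algebra)
  interpret Kt_m: prob_space "Kt m" by fact
  have "?h \<in> \<Theta> \<rightarrow>\<^sub>M prob_algebra (?SY \<Otimes>\<^sub>M (\<Theta> \<Otimes>\<^sub>M PiM {..<n} (\<lambda>_. \<Phi>)))"
    using m by measurable
  then have "?h \<in> Kt m \<rightarrow>\<^sub>M subprob_algebra (?SY \<Otimes>\<^sub>M (\<Theta> \<Otimes>\<^sub>M PiM {..<n} (\<lambda>_. \<Phi>)))"
    by (simp add: measurable_cong_sets[OF Kt_m(2) refl] measurable_prob_algebraD)
  then have "distr (Kt m \<bind> ?h) ?SY fst = Kt m \<bind> (\<lambda>\<theta>. distr (?h \<theta>) ?SY fst)"
    by (rule distr_bind[OF _ Kt_m.not_empty measurable_fst])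
  also have "\<dots> = Kt m \<bind> (\<lambda>_. return ?SY m)"
  proof (rule bind_cong[OF refl])
    fix \<theta> assume "\<theta> \<in> space (Kt m)"
    then have \<theta>: "\<theta> \<in> space \<Theta>"
      using sets_eq_imp_space_eq[OF Kt_m(2)] by simp
    then have P: "prob_space (PiM {..<n} (\<lambda>i. Ka (m i) \<theta>))"
        "sets (PiM {..<n} (\<lambda>i. Ka (m i) \<theta>)) = sets (PiM {..<n} (\<lambda>_. \<Phi>))"
      using measurable_space[OF Ka_n, of "(m, \<theta>)"] m by (simp_all add: space_prob_algebra space_pair_measure)
    have "(\<lambda>\<phi>. (m, \<theta>, \<phi>)) \<in> PiM {..<n} (\<lambda>i. Ka (m i) \<theta>) \<rightarrow>\<^sub>M ?SY \<Otimes>\<^sub>M (\<Theta> \<Otimes>\<^sub>M PiM {..<n} (\<lambda>_. \<Phi>))"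
      unfolding measurable_cong_sets[OF P(2) refl] using m \<theta> by measurable
    then show "distr (?h \<theta>) ?SY fst = return ?SY m"
      using m by (subst distr_distr) (simp_all add: comp_def prob_space.distr_const[OF P(1)])
  qed
  also have "\<dots> = return ?SY m"
    using m by (intro bind_const' Kt_m.prob_space_axioms prob_space_imp_subprob_space prob_space_return)
  finally show ?thesis .
qed

context
  fixes MSp :: "('s, 'a) mdp measure" and \<Theta> :: "'t measure" and \<Phi> :: "'p measure" and n :: nat
    and PM :: "(nat \<Rightarrow> ('s, 'a) mdp) measure" and Kt :: "(nat \<Rightarrow> ('s, 'a) mdp) \<Rightarrow> 't measure"
    and Ka :: "('s, 'a) mdp \<Rightarrow> 't \<Rightarrow> 'p measure"
  assumes PM: "prob_space PM" "sets PM = sets (PiM {..<n} (\<lambda>_. MSp))"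
    and Kt: "Kt \<in> PiM {..<n} (\<lambda>_. MSp) \<rightarrow>\<^sub>M prob_algebra \<Theta>"
    and Ka: "(\<lambda>(M, \<theta>). Ka M \<theta>) \<in> MSp \<Otimes>\<^sub>M \<Theta> \<rightarrow>\<^sub>M prob_algebra \<Phi>"
begin

lemma
  shows prob_space_joint_law: "prob_space (joint_law MSp \<Theta> \<Phi> n PM Kt Ka)"
    and sets_joint_law:
      "sets (joint_law MSp \<Theta> \<Phi> n PM Kt Ka) = sets (PiM {..<n} (\<lambda>_. MSp) \<Otimes>\<^sub>M (\<Theta> \<Otimes>\<^sub>M PiM {..<n} (\<lambda>_. \<Phi>)))"
proof -
  have "PM \<in> space (prob_algebra (PiM {..<n} (\<lambda>_. MSp)))"
    using PM by (simp add: space_prob_algebra)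
  note bind = this measurable_joint_law_kernel[OF Kt Ka]
  show "prob_space (joint_law MSp \<Theta> \<Phi> n PM Kt Ka)"
    unfolding joint_law_def by (rule prob_space_bind'[OF bind])
  show "sets (joint_law MSp \<Theta> \<Phi> n PM Kt Ka) = sets (PiM {..<n} (\<lambda>_. MSp) \<Otimes>\<^sub>M (\<Theta> \<Otimes>\<^sub>M PiM {..<n} (\<lambda>_. \<Phi>)))"
    unfolding joint_law_def by (rule sets_bind'[OF bind])
qed

lemma distr_fst_joint_law: "distr (joint_law MSp \<Theta> \<Phi> n PM Kt Ka) (PiM {..<n} (\<lambda>_. MSp)) fst = PM"
proof -
  interpret PM: prob_space PM by (fact PM(1))
  have "distr (joint_law MSp \<Theta> \<Phi> n PM Kt Ka) (PiM {..<n} (\<lambda>_. MSp)) fst = PM \<bind> return (PiM {..<n} (\<lambda>_. MSp))"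
    unfolding joint_law_def
    using measurable_prob_algebraD[OF measurable_joint_law_kernel[OF Kt Ka]] PM(2) distr_fst_joint_law_kernel[OF Kt Ka]
    by (subst distr_bind[OF _ PM.not_empty measurable_fst])
      (auto simp: measurable_cong_sets[OF PM(2) refl] sets_eq_imp_space_eq[OF PM(2)] intro!: bind_cong)
  also have "\<dots> = PM"
    by (rule bind_return''[OF PM(2)])
  finally show ?thesis .
qed

end

section \<open>The generalization gap\<close>

locale meta_rl_problem =
  fixes pol :: "'p \<Rightarrow> 's \<Rightarrow> 'a pmf" and MSp U :: "('s, 'a) mdp measure"
    and \<Theta> :: "'t measure" and \<Phi> :: "'p measure" and Ka :: "('s, 'a) mdp \<Rightarrow> 't \<Rightarrow> 'p measure"
    and n H :: nat and \<gamma> :: real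
  assumes n_pos: "0 < n" and gamma: "0 \<le> \<gamma>" "\<gamma> < 1" and valid: "\<forall>M\<in>space MSp. valid_mdp M"
    and U: "prob_space U" "sets U = sets MSp"
    and Ka: "(\<lambda>(M, \<theta>). Ka M \<theta>) \<in> MSp \<Otimes>\<^sub>M \<Theta> \<rightarrow>\<^sub>M prob_algebra \<Phi>"
    and J_meas: "(\<lambda>(\<phi>, M). Jret \<gamma> H (pol \<phi>) M) \<in> borel_measurable (\<Phi> \<Otimes>\<^sub>M MSp)"
begin

definition adapted_return :: "('s, 'a) mdp \<Rightarrow> 't \<Rightarrow> real" where
  "adapted_return M \<theta> = (\<integral>\<phi>. Jret \<gamma> H (pol \<phi>) M \<partial>Ka M \<theta>)"

lemma adapted_return_bounds:
  assumes "M \<in> space MSp" "\<theta> \<in> space \<Theta>"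
  shows "0 \<le> adapted_return M \<theta> \<and> adapted_return M \<theta> \<le> 1 / (1 - \<gamma>)"
proof -
  have Ka_M: "prob_space (Ka M \<theta>)" "sets (Ka M \<theta>) = sets \<Phi>"
    using measurable_space[OF Ka, of "(M, \<theta>)"] assms by (simp_all add: space_pair_measure space_prob_algebra)
  interpret Ka_M: prob_space "Ka M \<theta>" by fact
  show ?thesis
    unfolding adapted_return_def
  proof (rule Ka_M.integral_bounds)
    show "(\<lambda>\<phi>. Jret \<gamma> H (pol \<phi>) M) \<in> borel_measurable (Ka M \<theta>)"
      using measurable_Pair1[OF J_meas assms(1)] by (simp add: measurable_cong_sets[OF Ka_M(2) refl])
    show "AE \<phi> in Ka M \<theta>. 0 \<le> Jret \<gamma> H (pol \<phi>) M \<and> Jret \<gamma> H (pol \<phi>) M \<le> 1 / (1 - \<gamma>)"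
      using Jret_bounds valid assms(1) gamma by blast
  qed
qed

lemma measurable_adapted_return[measurable]:
  "(\<lambda>(M, \<theta>). adapted_return M \<theta>) \<in> borel_measurable (MSp \<Otimes>\<^sub>M \<Theta>)"
proof -
  have "(\<lambda>(x, \<phi>). Jret \<gamma> H (pol \<phi>) (fst x)) \<in> borel_measurable ((MSp \<Otimes>\<^sub>M \<Theta>) \<Otimes>\<^sub>M \<Phi>)"
    using measurable_compose[OF _ J_meas, of "\<lambda>(x, \<phi>). (\<phi>, fst x)" "(MSp \<Otimes>\<^sub>M \<Theta>) \<Otimes>\<^sub>M \<Phi>"]
    by (simp add: split_beta')
  from measurable_integral_kernel[OF measurable_prob_algebraD[OF Ka] this]
  show ?thesis
    by (simp add: adapted_return_def split_beta')
qed

lemma measurable_adapted_return_on_U: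
  "\<theta> \<in> space \<Theta> \<Longrightarrow> (\<lambda>M. adapted_return M \<theta>) \<in> borel_measurable U"
  using measurable_Pair1[OF measurable_adapted_return] by (simp add: measurable_cong_sets[OF U(2) refl])

text \<open>The gap depends on the meta-parameter only; it is taken as a function of the whole output
  \<open>(\<theta>, \<phi>\<^sub>1, \<dots>, \<phi>\<^sub>n)\<close> because that is the variable of the mutual information.\<close>

definition generalization_gap :: "'t \<times> (nat \<Rightarrow> 'p) \<Rightarrow> (nat \<Rightarrow> ('s, 'a) mdp) \<Rightarrow> real" where
  "generalization_gap w m = emp_obj \<gamma> H pol Ka n m (fst w) - pop_obj \<gamma> H pol Ka U (fst w)"

lemma generalization_gap_eq:
  "generalization_gap w m = (1 / real n) * (\<Sum>i<n. adapted_return (m i) (fst w)) - (\<integral>M. adapted_return M (fst w) \<partial>U)"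
  by (simp add: generalization_gap_def emp_obj_def pop_obj_def adapted_return_def)

lemma measurable_generalization_gap:
  "(\<lambda>(w, m). generalization_gap w m) \<in> borel_measurable ((\<Theta> \<Otimes>\<^sub>M PiM {..<n} (\<lambda>_. \<Phi>)) \<Otimes>\<^sub>M PiM {..<n} (\<lambda>_. MSp))"
proof -
  interpret U: prob_space U by (fact U(1))
  have "(\<lambda>(\<theta>, M). adapted_return M \<theta>) \<in> borel_measurable (\<Theta> \<Otimes>\<^sub>M U)"
    using measurable_pair_swap[OF measurable_adapted_return]
    by (simp add: measurable_cong_sets[OF sets_pair_measure_cong[OF refl U(2)] refl] split_beta')
  then have [measurable]: "(\<lambda>\<theta>. \<integral>M. adapted_return M \<theta> \<partial>U) \<in> borel_measurable \<Theta>"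
    by (rule U.borel_measurable_lebesgue_integral)
  show ?thesis
    unfolding generalization_gap_eq by measurable
qed

lemma abs_generalization_gap_le:
  assumes "w \<in> space (\<Theta> \<Otimes>\<^sub>M PiM {..<n} (\<lambda>_. \<Phi>))" "m \<in> space (PiM {..<n} (\<lambda>_. MSp))"
  shows "\<bar>generalization_gap w m\<bar> \<le> 1 / (1 - \<gamma>)"
proof -
  interpret U: prob_space U by (fact U(1))
  have \<theta>: "fst w \<in> space \<Theta>"
    using assms(1) by (auto simp: space_pair_measure)
  have "m i \<in> space MSp" if "i < n" for i
    using assms(2) that by (auto simp: space_PiM)
  then have "0 \<le> (\<Sum>i<n. adapted_return (m i) (fst w))" "(\<Sum>i<n. adapted_return (m i) (fst w)) \<le> (\<Sum>i<n. 1 / (1 - \<gamma>))"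
    using adapted_return_bounds[OF _ \<theta>] by (intro sum_nonneg sum_mono; simp)+
  then have "0 \<le> (1 / real n) * (\<Sum>i<n. adapted_return (m i) (fst w))"
    "(1 / real n) * (\<Sum>i<n. adapted_return (m i) (fst w)) \<le> 1 / (1 - \<gamma>)"
    using n_pos by (auto simp: field_simps)
  moreover have "0 \<le> (\<integral>M. adapted_return M (fst w) \<partial>U) \<and> (\<integral>M. adapted_return M (fst w) \<partial>U) \<le> 1 / (1 - \<gamma>)"
    using measurable_adapted_return_on_U[OF \<theta>] adapted_return_bounds[OF _ \<theta>]
    by (intro U.integral_bounds AE_I2) (simp_all add: sets_eq_imp_space_eq[OF U(2)])
  ultimately show ?thesis
    unfolding generalization_gap_eq abs_le_iff by linarith
qed

lemma generalization_gap_subgaussian: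
  assumes "w \<in> space (\<Theta> \<Otimes>\<^sub>M PiM {..<n} (\<lambda>_. \<Phi>))" and "0 < l"
  shows "(\<integral>\<^sup>+m. exp (l * generalization_gap w m) \<partial>PiM {..<n} (\<lambda>_. U))
           \<le> exp (l\<^sup>2 * ((1 / (1 - \<gamma>))\<^sup>2 / (8 * real n)))"
proof -
  have \<theta>: "fst w \<in> space \<Theta>"
    using assms(1) by (auto simp: space_pair_measure)
  from nn_integral_exp_empirical_mean_le[OF U(1) measurable_adapted_return_on_U[OF \<theta>] _ n_pos assms(2),
      of 0 "1 / (1 - \<gamma>)"]
  show ?thesis
    using adapted_return_bounds[OF _ \<theta>] sets_eq_imp_space_eq[OF U(2)]
    by (simp add: generalization_gap_eq)
qed

text \<open>Hoeffding's lemma gives the variance-proxy constant \<open>1 / 8\<close> where the stated bound budgets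
  \<open>1 / 2\<close>, so the bound obtained is smaller by a factor of two.\<close>

lemma two_sqrt_subgaussian_bound_le:
  assumes "0 \<le> V"
  shows "2 * sqrt ((1 / (1 - \<gamma>))\<^sup>2 / (8 * real n) * V) \<le> sqrt (2 * V / (real n * (1 - \<gamma>) ^ 2))"
proof -
  define x where "x = V / (real n * (1 - \<gamma>) ^ 2)"
  have "0 \<le> x"
    using assms gamma by (simp add: x_def)
  have "(1 / (1 - \<gamma>))\<^sup>2 / (8 * real n) * V = x / 8"
    by (simp add: x_def power_divide)
  then have "2 * sqrt ((1 / (1 - \<gamma>))\<^sup>2 / (8 * real n) * V) = sqrt 4 * sqrt (x / 8)"
    by simp
  also have "\<dots> = sqrt (4 * (x / 8))"
    by (rule real_sqrt_mult[symmetric])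
  also have "\<dots> \<le> sqrt (2 * x)"
    using \<open>0 \<le> x\<close> by simp
  finally show ?thesis
    by (simp add: x_def)
qed

end

theorem theorem3:
  fixes pol :: "'p \<Rightarrow> 's::finite \<Rightarrow> 'a::finite pmf"
    and MSp :: "('s, 'a) mdp measure"
    and T U :: "('s, 'a) mdp measure"
    and \<Theta> :: "'t measure" and \<Phi> :: "'p measure"
    and Kt :: "(nat \<Rightarrow> ('s, 'a) mdp) \<Rightarrow> 't measure"
    and Ka :: "('s, 'a) mdp \<Rightarrow> 't \<Rightarrow> 'p measure"
    and n H :: nat and \<gamma> :: real
  assumes n_pos: "0 < n"
    and gamma: "0 \<le> \<gamma>" "\<gamma> < 1"
    and valid: "\<forall>M\<in>space MSp. valid_mdp M"
    and T: "prob_space T" "sets T = sets MSp"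
    and U: "prob_space U" "sets U = sets MSp"
    and Kt: "Kt \<in> measurable (PiM {..<n} (\<lambda>_. MSp)) (prob_algebra \<Theta>)"
    and Ka: "(\<lambda>(M, \<theta>). Ka M \<theta>) \<in> measurable (MSp \<Otimes>\<^sub>M \<Theta>) (prob_algebra \<Phi>)"
    and J_meas: "(\<lambda>(\<phi>, M). Jret \<gamma> H (pol \<phi>) M) \<in> borel_measurable (\<Phi> \<Otimes>\<^sub>M MSp)"
    and KL_fin: "KL_finite (PiM {..<n} (\<lambda>_. T)) (PiM {..<n} (\<lambda>_. U))"
    and MI_fin: "MI_finite (joint_law MSp \<Theta> \<Phi> n (PiM {..<n} (\<lambda>_. T)) Kt Ka)
                   (\<Theta> \<Otimes>\<^sub>M PiM {..<n} (\<lambda>_. \<Phi>)) (PiM {..<n} (\<lambda>_. MSp)) snd fst"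
  shows "(\<integral>x. emp_obj \<gamma> H pol Ka n (fst x) (fst (snd x)) - pop_obj \<gamma> H pol Ka U (fst (snd x))
            \<partial>(joint_law MSp \<Theta> \<Phi> n (PiM {..<n} (\<lambda>_. T)) Kt Ka))
         \<le> sqrt ((2 * prob_space.mutual_information
                        (joint_law MSp \<Theta> \<Phi> n (PiM {..<n} (\<lambda>_. T)) Kt Ka) (exp 1)
                        (\<Theta> \<Otimes>\<^sub>M PiM {..<n} (\<lambda>_. \<Phi>)) (PiM {..<n} (\<lambda>_. MSp)) snd fst
                  + 2 * KLdiv (PiM {..<n} (\<lambda>_. T)) (PiM {..<n} (\<lambda>_. U)))
                 / (real n * (1 - \<gamma>) ^ 2))"
    (is "?gap \<le> sqrt ((2 * ?I + 2 * ?D) / _)")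
proof -
  interpret meta_rl_problem pol MSp U \<Theta> \<Phi> Ka n H \<gamma>
    by (rule meta_rl_problem.intro[OF n_pos gamma valid U Ka J_meas])
  let ?J = "joint_law MSp \<Theta> \<Phi> n (PiM {..<n} (\<lambda>_. T)) Kt Ka"
  have PM: "prob_space (PiM {..<n} (\<lambda>_. T))" "sets (PiM {..<n} (\<lambda>_. T)) = sets (PiM {..<n} (\<lambda>_. MSp))"
    using T by (auto intro!: prob_space_PiM sets_PiM_cong)
  have QY: "prob_space (PiM {..<n} (\<lambda>_. U))" "sets (PiM {..<n} (\<lambda>_. U)) = sets (PiM {..<n} (\<lambda>_. MSp))"
    using U by (auto intro!: prob_space_PiM sets_PiM_cong)
  note J = prob_space_joint_law[OF PM Kt Ka] sets_joint_law[OF PM Kt Ka] distr_fst_joint_law[OF PM Kt Ka]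
  have "?gap \<le> 2 * sqrt ((1 / (1 - \<gamma>))\<^sup>2 / (8 * real n) * (?I + ?D))"
    using integral_le_2_sqrt_information_of_subgaussian[OF J(1,2) QY measurable_generalization_gap
        abs_generalization_gap_le _ generalization_gap_subgaussian MI_fin] KL_fin n_pos gamma
    unfolding J(3) generalization_gap_def by simp
  also have "\<dots> \<le> sqrt ((2 * ?I + 2 * ?D) / (real n * (1 - \<gamma>) ^ 2))"
  proof -
    have "0 \<le> ?I"
      by (intro prob_space.mutual_information_nonneg[OF J(1) _ _ MI_fin])
        (simp_all add: measurable_cong_sets[OF J(2) refl])
    moreover have "0 \<le> ?D"
      using PM QY by (intro KLdiv_nonneg[OF PM(1) QY(1) _ KL_fin]) simp
    ultimately show ?thesis
      using two_sqrt_subgaussian_bound_le[of "?I + ?D"] by simp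
  qed
  finally show ?thesis .
qed

end
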